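(* Let $\mathrm{ReLU}:\mathbb{R}\to\mathbb{R}$ be $\mathrm{ReLU}(x)=\max(x,0)$, and let \[ \mathcal{X}:=\mathrm{Span}\left(\left\{\mathrm{ReLU}(a\,\cdot+b)\,:\, a\in\mathbb{R}\setminus\{0\},\ b\in\mathbb{R}\right\}\right), \] the set of all finite real linear combinations of the functions $x\mapsto \mathrm{ReLU}(ax+b)$ with $a\neq 0$, $b\in\mathbb{R}$. Let \[ \mathcal{Y}:=\left\{f\in C(\mathbb{R})\,:\, \lim_{x\to+\infty}\frac{f(x)}{1+|x|}\ \text{and}\ \lim_{x\to-\infty}\frac{f(x)}{1+|x|}\ \text{both exist in } \mathbb{R}\right\}, \] equipped with the norm \[ \|f\|_{\mathcal{Y}}:=\sup_{x\in\mathbb{R}}\frac{|f(x)|}{1+|x|}. \] Then $\mathcal{X}\subset\mathcal{Y}$ and $\mathcal{X}$ is dense in $\mathcal{Y}$ with respect to $\|\cdot\|_{\mathcal{Y}}$: for every $f\in\mathcal{Y}$ and every $\varepsilon>0$ there exists $h\in\mathcal{X}$ with $\|f-h\|_{\mathcal{Y}}<\varepsilon$.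
   Context: $C(\mathbb{R})$ denotes the space of continuous real-valued functions on $\mathbb{R}$. Elements of $\mathcal{X}$ are two-layer feed-forward neural networks with ReLU activation. *)

theory Defs
  imports "HOL-Analysis.Analysis"
begin

definition relu :: "real \<Rightarrow> real" where
  "relu x = max x 0"

definition ReLU_X :: "(real \<Rightarrow> real) set" where
  "ReLU_X = {h. \<exists>(n::nat) (c::nat \<Rightarrow> real) (a::nat \<Rightarrow> real) (b::nat \<Rightarrow> real).
      (\<forall>i<n. a i \<noteq> 0) \<and> h = (\<lambda>x. \<Sum>i<n. c i * relu (a i * x + b i))}"

definition Y_space :: "(real \<Rightarrow> real) set" where
  "Y_space = {f. continuous_on UNIV f \<and>
      (\<exists>L::real. ((\<lambda>x. f x / (1 + \<bar>x\<bar>)) \<longlongrightarrow> L) at_top) \<and>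
      (\<exists>L::real. ((\<lambda>x. f x / (1 + \<bar>x\<bar>)) \<longlongrightarrow> L) at_bot)}"

definition Y_norm :: "(real \<Rightarrow> real) \<Rightarrow> real" where
  "Y_norm f = (SUP x. \<bar>f x\<bar> / (1 + \<bar>x\<bar>))"

end

theory Submission
  imports Defs
begin

(* Subtracting L1 ReLU(x) + L2 ReLU(-x), where L1 and L2 are the limits of f x / (1 + |x|) at
   +\<infinity> and -\<infinity>, leaves a continuous g with g x = o(1 + |x|). Outside a large interval [-R, R]
   this is already small in the weighted norm; on [-R, R] g is uniformly continuous, so its
   piecewise linear interpolant on a fine grid, continued by constants, approximates it uniformly.
   That interpolant is a ReLU network: each grid cell [T, T'] contributes a ramp
   s (ReLU(x - T) - ReLU(x - T')), and constants are networks because ReLU t - ReLU (-t) = t. *)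

lemma ReLU_XI: "(\<forall>i<(n::nat). a i \<noteq> 0) \<Longrightarrow> (\<lambda>x. \<Sum>i<n. c i * relu (a i * x + b i)) \<in> ReLU_X"
  unfolding ReLU_X_def by blast

lemma ReLU_XE:
  assumes "h \<in> ReLU_X"
  obtains n :: nat and a c b where "\<forall>i<n. a i \<noteq> 0" "h = (\<lambda>x. \<Sum>i<n. c i * relu (a i * x + b i))"
  using assms unfolding ReLU_X_def by blast

lemma ReLU_X_relu: "a \<noteq> 0 \<Longrightarrow> (\<lambda>x. relu (a * x + b)) \<in> ReLU_X"
  using ReLU_XI[of "1::nat" "\<lambda>_. a" "\<lambda>_. 1" "\<lambda>_. b"] by simp

lemma ReLU_X_cmult:
  assumes "p \<in> ReLU_X"
  shows "(\<lambda>x. k * p x) \<in> ReLU_X"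
proof -
  obtain n :: nat and a c b where a: "\<forall>i<n. a i \<noteq> 0" and p: "p = (\<lambda>x. \<Sum>i<n. c i * relu (a i * x + b i))"
    using assms by (rule ReLU_XE)
  show ?thesis
    using ReLU_XI[OF a, of "\<lambda>i. k * c i" b] by (simp add: p sum_distrib_left mult.assoc)
qed

lemma ReLU_X_add:
  assumes "p \<in> ReLU_X" "q \<in> ReLU_X"
  shows "(\<lambda>x. p x + q x) \<in> ReLU_X"
proof -
  obtain n :: nat and a c b where a: "\<forall>i<n. a i \<noteq> 0" and p: "p = (\<lambda>x. \<Sum>i<n. c i * relu (a i * x + b i))"
    using assms(1) by (rule ReLU_XE)
  obtain m :: nat and a' c' b' where a': "\<forall>i<m. a' i \<noteq> 0"
    and q: "q = (\<lambda>x. \<Sum>i<m. c' i * relu (a' i * x + b' i))"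
    using assms(2) by (rule ReLU_XE)
  have sum_split: "(\<Sum>i<n + k. F i) = (\<Sum>i<n. F i) + (\<Sum>i<k. F (n + i))" for F :: "nat \<Rightarrow> real" and k :: nat
    by (induction k) (simp_all add: add.assoc)
  define join :: "(nat \<Rightarrow> real) \<Rightarrow> (nat \<Rightarrow> real) \<Rightarrow> nat \<Rightarrow> real"
    where "join u v i = (if i < n then u i else v (i - n))" for u v i
  have "(\<lambda>x. \<Sum>i<n + m. join c c' i * relu (join a a' i * x + join b b' i)) \<in> ReLU_X"
    using a a' by (intro ReLU_XI) (auto simp: join_def)
  then show ?thesis
    by (simp add: sum_split p q join_def)
qed

lemma ReLU_X_diff: "p \<in> ReLU_X \<Longrightarrow> q \<in> ReLU_X \<Longrightarrow> (\<lambda>x. p x - q x) \<in> ReLU_X"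
  using ReLU_X_add[OF _ ReLU_X_cmult[of q "-1"]] by simp

lemma relu_diff_relu_minus: "relu t - relu (- t) = t"
  by (simp add: relu_def max_def)

lemma ReLU_X_const: "(\<lambda>x. k) \<in> ReLU_X"
proof -
  have one: "(relu (x + 1) - relu (- x - 1)) - (relu x - relu (- x)) = 1" for x
    using relu_diff_relu_minus[of "x + 1"] relu_diff_relu_minus[of x] by simp
  have "(\<lambda>x. k * ((relu (1 * x + 1) - relu ((- 1) * x + - 1)) - (relu (1 * x + 0) - relu ((- 1) * x + 0))))
    \<in> ReLU_X"
    by (intro ReLU_X_cmult ReLU_X_diff ReLU_X_relu) simp_all
  then show ?thesis
    using one by simp
qed

lemma affine_div_tendsto_at_top:
  fixes a b :: real
  shows "((\<lambda>x. (a * x + b) / (1 + \<bar>x\<bar>)) \<longlongrightarrow> a) at_top"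
proof -
  have "filterlim (\<lambda>x::real. 1 + x) at_infinity at_top"
    by (intro filterlim_at_top_imp_at_infinity filterlim_tendsto_add_at_top[OF tendsto_const filterlim_ident])
  then have "((\<lambda>x. a + (b - a) / (1 + x)) \<longlongrightarrow> a + 0) at_top"
    by (intro tendsto_add tendsto_const tendsto_divide_0[OF tendsto_const])
  moreover have "\<forall>\<^sub>F x in at_top. a + (b - a) / (1 + x) = (a * x + b) / (1 + \<bar>x\<bar>)"
    using eventually_gt_at_top[of 0] by eventually_elim (simp add: field_simps)
  ultimately show ?thesis
    by (simp add: tendsto_cong)
qed

lemma relu_div_tendsto_at_top:
  fixes a b :: real
  shows "((\<lambda>x. relu (a * x + b) / (1 + \<bar>x\<bar>)) \<longlongrightarrow> max a 0) at_top"
proof -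
  have "\<exists>c. \<forall>\<^sub>F x in at_top. relu (a * x + b) = max a 0 * x + c"
  proof (cases a "0::real" rule: linorder_cases)
    case less
    have "\<forall>\<^sub>F x in at_top. relu (a * x + b) = 0"
      using eventually_gt_at_top[of "- b / a"]
      by eventually_elim (use less in \<open>auto simp: relu_def field_simps\<close>)
    then show ?thesis using less by auto
  next
    case equal
    then show ?thesis by auto
  next
    case greater
    have "\<forall>\<^sub>F x in at_top. relu (a * x + b) = a * x + b"
      using eventually_gt_at_top[of "- b / a"]
      by eventually_elim (use greater in \<open>auto simp: relu_def field_simps\<close>)
    then show ?thesis using greater by auto
  qed
  then obtain c where "\<forall>\<^sub>F x in at_top. relu (a * x + b) = max a 0 * x + c"
    by blast
  then have "\<forall>\<^sub>F x in at_top. relu (a * x + b) / (1 + \<bar>x\<bar>) = (max a 0 * x + c) / (1 + \<bar>x\<bar>)"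
    by eventually_elim simp
  then show ?thesis
    using affine_div_tendsto_at_top by (rule tendsto_cong[THEN iffD2])
qed

lemma relu_div_tendsto_at_bot:
  fixes a b :: real
  shows "((\<lambda>x. relu (a * x + b) / (1 + \<bar>x\<bar>)) \<longlongrightarrow> max (- a) 0) at_bot"
  unfolding filterlim_at_bot_mirror using relu_div_tendsto_at_top[of "- a" b] by simp

lemma ReLU_X_subset_Y_space: "ReLU_X \<subseteq> Y_space"
proof
  fix h assume "h \<in> ReLU_X"
  then obtain n :: nat and a c b where h: "h = (\<lambda>x. \<Sum>i<n. c i * relu (a i * x + b i))"
    by (rule ReLU_XE)
  have quotient: "(\<lambda>x. h x / (1 + \<bar>x\<bar>)) = (\<lambda>x. \<Sum>i<n. c i * (relu (a i * x + b i) / (1 + \<bar>x\<bar>)))"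
    by (simp add: h sum_divide_distrib)
  have "continuous_on UNIV h"
    unfolding h relu_def by (intro continuous_intros)
  moreover have "((\<lambda>x. h x / (1 + \<bar>x\<bar>)) \<longlongrightarrow> (\<Sum>i<n. c i * max (a i) 0)) at_top"
    unfolding quotient by (intro tendsto_sum tendsto_mult_left relu_div_tendsto_at_top)
  moreover have "((\<lambda>x. h x / (1 + \<bar>x\<bar>)) \<longlongrightarrow> (\<Sum>i<n. c i * max (- a i) 0)) at_bot"
    unfolding quotient by (intro tendsto_sum tendsto_mult_left relu_div_tendsto_at_bot)
  ultimately show "h \<in> Y_space"
    unfolding Y_space_def by blast
qed

lemma linear_interpolation_error:
  fixes g :: "real \<Rightarrow> real"
  assumes "T < T'" "x \<in> {T..T'}" "\<bar>g T - g x\<bar> \<le> \<eta>" "\<bar>g T' - g x\<bar> \<le> \<eta>"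
  shows "\<bar>g T + (g T' - g T) / (T' - T) * (x - T) - g x\<bar> \<le> \<eta>"
proof -
  define \<theta> where "\<theta> = (x - T) / (T' - T)"
  have "0 \<le> \<theta>" "\<theta> \<le> 1"
    using assms(1,2) by (auto simp: \<theta>_def field_simps)
  moreover have "g T \<in> cball (g x) \<eta>" "g T' \<in> cball (g x) \<eta>"
    using assms(3,4) by (auto simp: dist_real_def abs_minus_commute)
  ultimately have "(1 - \<theta>) * g T + \<theta> * g T' \<in> cball (g x) \<eta>"
    using convexD_alt[OF convex_cball, of "g T" "g x" \<eta> "g T'" \<theta>] by simp
  moreover have "g T + (g T' - g T) / (T' - T) * (x - T) = g T + \<theta> * (g T' - g T)"
    by (simp add: \<theta>_def)
  ultimately show ?thesis
    by (simp add: dist_real_def abs_minus_commute algebra_simps)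
qed

definition clamped_approx :: "(real \<Rightarrow> real) \<Rightarrow> (real \<Rightarrow> real) \<Rightarrow> real \<Rightarrow> real \<Rightarrow> real \<Rightarrow> bool" where
  "clamped_approx p g s t \<eta> \<longleftrightarrow>
    (\<forall>x\<le>s. p x = g s) \<and> (\<forall>x\<ge>t. p x = g t) \<and> (\<forall>x\<in>{s..t}. \<bar>p x - g x\<bar> \<le> \<eta>)"

lemma clamped_approx_extend_ReLU_X:
  fixes g p :: "real \<Rightarrow> real"
  assumes "p \<in> ReLU_X" "clamped_approx p g s T \<eta>" "s \<le> T" "T < T'"
    and "\<And>x. x \<in> {T..T'} \<Longrightarrow> \<bar>g T - g x\<bar> \<le> \<eta> \<and> \<bar>g T' - g x\<bar> \<le> \<eta>"
  shows "\<exists>q\<in>ReLU_X. clamped_approx q g s T' \<eta>"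
proof -
  have p_left: "\<forall>x\<le>s. p x = g s" and p_right: "\<forall>x\<ge>T. p x = g T"
    and p_approx: "\<forall>x\<in>{s..T}. \<bar>p x - g x\<bar> \<le> \<eta>"
    using assms(2) unfolding clamped_approx_def by blast+
  define slope where "slope = (g T' - g T) / (T' - T)"
  define q where "q x = p x + slope * relu (x - T) - slope * relu (x - T')" for x
  have "q \<in> ReLU_X"
    using ReLU_X_relu[of 1 "- T"] ReLU_X_relu[of 1 "- T'"] \<open>p \<in> ReLU_X\<close>
    unfolding q_def[abs_def] by (intro ReLU_X_diff ReLU_X_add ReLU_X_cmult) simp_all
  moreover have "q x = g s" if "x \<le> s" for x
    using that assms(3,4) p_left by (simp add: q_def relu_def)
  moreover have "q x = g T'" if "x \<ge> T'" for x
  proof -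
    have "q x = g T + slope * (T' - T)"
      using that assms(4) p_right by (simp add: q_def relu_def algebra_simps)
    then show ?thesis
      using assms(4) by (simp add: slope_def)
  qed
  moreover have "\<bar>q x - g x\<bar> \<le> \<eta>" if "x \<in> {s..T'}" for x
  proof (cases "x \<le> T")
    case True
    then show ?thesis
      using that p_approx assms(4) by (simp add: q_def relu_def)
  next
    case False
    then have "q x = g T + (g T' - g T) / (T' - T) * (x - T)"
      using that p_right by (simp add: q_def relu_def slope_def)
    then show ?thesis
      using linear_interpolation_error[of T T' x g \<eta>] assms(4,5) False that by simp
  qed
  ultimately show ?thesis
    unfolding clamped_approx_def by blast
qed

lemma ReLU_X_grid_interpolant:
  fixes g :: "real \<Rightarrow> real"
  assumes "d > 0"
    and "\<And>x y. x \<in> {t0..t0 + real n * d} \<Longrightarrow> y \<in> {t0..t0 + real n * d} \<Longrightarrow> \<bar>x - y\<bar> \<le> d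
      \<Longrightarrow> \<bar>g x - g y\<bar> \<le> \<eta>"
  shows "\<exists>p\<in>ReLU_X. clamped_approx p g t0 (t0 + real n * d) \<eta>"
  using assms(2)
proof (induction n)
  case 0
  have "\<eta> \<ge> 0"
    using "0.prems"[of t0 t0] \<open>d > 0\<close> by simp
  then have "clamped_approx (\<lambda>x. g t0) g t0 t0 \<eta>"
    by (auto simp: clamped_approx_def)
  then show ?case
    using ReLU_X_const by auto
next
  case (Suc n)
  define T where "T = t0 + real n * d"
  have T': "t0 + real (Suc n) * d = T + d"
    by (simp add: T_def algebra_simps)
  have "t0 \<le> T"
    using \<open>d > 0\<close> by (simp add: T_def)
  have modulus: "\<bar>g x - g y\<bar> \<le> \<eta>" if "x \<in> {t0..T + d}" "y \<in> {t0..T + d}" "\<bar>x - y\<bar> \<le> d" for x y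
    using Suc.prems that unfolding T' by blast
  then obtain p where "p \<in> ReLU_X" "clamped_approx p g t0 T \<eta>"
    using Suc.IH \<open>d > 0\<close> unfolding T_def by force
  moreover have "\<bar>g T - g x\<bar> \<le> \<eta> \<and> \<bar>g (T + d) - g x\<bar> \<le> \<eta>" if "x \<in> {T..T + d}" for x
    using that \<open>t0 \<le> T\<close> by (auto intro!: modulus)
  ultimately show ?case
    unfolding T' using clamped_approx_extend_ReLU_X \<open>t0 \<le> T\<close> \<open>d > 0\<close> by simp
qed

lemma ReLU_X_approx_on_interval:
  fixes g :: "real \<Rightarrow> real"
  assumes "continuous_on {s..t} g" "s < t" "\<eta> > 0"
  obtains p where "p \<in> ReLU_X" "clamped_approx p g s t \<eta>"
proof -
  have "uniformly_continuous_on {s..t} g"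
    using assms(1) by (rule compact_uniformly_continuous) simp
  then obtain \<delta> where "\<delta> > 0"
    and \<delta>: "\<And>x y. x \<in> {s..t} \<Longrightarrow> y \<in> {s..t} \<Longrightarrow> dist y x < \<delta> \<Longrightarrow> dist (g y) (g x) < \<eta>"
    using assms(3) unfolding uniformly_continuous_on_def by metis
  define n :: nat where "n = nat \<lceil>(t - s) / \<delta>\<rceil> + 1"
  define d where "d = (t - s) / real n"
  have "(t - s) / \<delta> < real n"
    unfolding n_def by linarith
  then have "d < \<delta>"
    using \<open>\<delta> > 0\<close> by (simp add: d_def n_def field_simps)
  have "d > 0" and t_eq: "s + real n * d = t"
    using assms(2) by (simp_all add: d_def n_def)
  have "\<bar>g x - g y\<bar> \<le> \<eta>" if "x \<in> {s..t}" "y \<in> {s..t}" "\<bar>x - y\<bar> \<le> d" for x y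
    using \<delta>[of y x] that \<open>d < \<delta>\<close> by (simp add: dist_real_def)
  then show ?thesis
    using ReLU_X_grid_interpolant[OF \<open>d > 0\<close>, of s n g \<eta>] that unfolding t_eq by blast
qed

lemma clamped_approx_error:
  fixes g p :: "real \<Rightarrow> real"
  assumes "R \<ge> 0" "\<eta> \<ge> 0"
    and tail: "\<And>x. R \<le> \<bar>x\<bar> \<Longrightarrow> \<bar>g x\<bar> \<le> \<eta> * (1 + \<bar>x\<bar>)"
    and "clamped_approx p g (-R) R \<eta>"
  shows "\<bar>g x - p x\<bar> \<le> 2 * \<eta> * (1 + \<bar>x\<bar>)"
proof (cases "\<bar>x\<bar> \<le> R")
  case True
  then have "x \<in> {-R..R}"
    by auto
  then have "\<bar>g x - p x\<bar> \<le> \<eta>"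
    using assms(4) unfolding clamped_approx_def by (metis abs_minus_commute)
  also have "\<dots> \<le> 2 * \<eta> * (1 + \<bar>x\<bar>)"
    using \<open>\<eta> \<ge> 0\<close> by (simp add: algebra_simps add_increasing)
  finally show ?thesis .
next
  case False
  then obtain y where "\<bar>y\<bar> = R" and "p x = g y"
    using assms(4) \<open>R \<ge> 0\<close> unfolding clamped_approx_def by (cases "x \<le> 0") force+
  then have "\<bar>g x - p x\<bar> \<le> \<eta> * (1 + \<bar>x\<bar>) + \<eta> * (1 + R)"
    using tail[of x] tail[of y] False by (fastforce intro: order.trans[OF abs_triangle_ineq4])
  also have "\<dots> \<le> 2 * \<eta> * (1 + \<bar>x\<bar>)"
    using False \<open>\<eta> \<ge> 0\<close> mult_left_mono[of R "\<bar>x\<bar>" \<eta>] by (simp add: algebra_simps)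
  finally show ?thesis .
qed

lemma Y_norm_le:
  assumes "\<And>x. \<bar>f x\<bar> \<le> C * (1 + \<bar>x\<bar>)"
  shows "Y_norm f \<le> C"
  unfolding Y_norm_def
proof (rule cSUP_least)
  fix x :: real
  have "1 + \<bar>x\<bar> > 0"
    by (simp add: add_pos_nonneg)
  then show "\<bar>f x\<bar> / (1 + \<bar>x\<bar>) \<le> C"
    using assms[of x] by (simp add: divide_le_eq)
qed simp

lemma Y_space_remove_asymptotes:
  assumes "f \<in> Y_space"
  obtains L1 L2 where "continuous_on UNIV (\<lambda>x. f x - L1 * relu x - L2 * relu (- x))"
    "((\<lambda>x. (f x - L1 * relu x - L2 * relu (- x)) / (1 + \<bar>x\<bar>)) \<longlongrightarrow> 0) at_infinity"
proof -
  obtain L1 L2 where "continuous_on UNIV f"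
    and L1: "((\<lambda>x. f x / (1 + \<bar>x\<bar>)) \<longlongrightarrow> L1) at_top"
    and L2: "((\<lambda>x. f x / (1 + \<bar>x\<bar>)) \<longlongrightarrow> L2) at_bot"
    using assms unfolding Y_space_def by blast
  define g where "g x = f x - L1 * relu x - L2 * relu (- x)" for x
  have g_quotient: "g x / (1 + \<bar>x\<bar>)
      = f x / (1 + \<bar>x\<bar>) - L1 * (relu (1 * x + 0) / (1 + \<bar>x\<bar>)) - L2 * (relu ((- 1) * x + 0) / (1 + \<bar>x\<bar>))"
    for x
    by (simp add: g_def diff_divide_distrib)
  have "((\<lambda>x. g x / (1 + \<bar>x\<bar>)) \<longlongrightarrow> L1 - L1 * max 1 0 - L2 * max (- 1) 0) at_top"
    unfolding g_quotient by (intro tendsto_intros L1 relu_div_tendsto_at_top)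
  moreover have "((\<lambda>x. g x / (1 + \<bar>x\<bar>)) \<longlongrightarrow> L2 - L1 * max (- 1) 0 - L2 * max (- (- 1)) 0) at_bot"
    unfolding g_quotient by (intro tendsto_intros L2 relu_div_tendsto_at_bot)
  ultimately have "((\<lambda>x. g x / (1 + \<bar>x\<bar>)) \<longlongrightarrow> 0) at_infinity"
    unfolding at_infinity_eq_at_top_bot by (intro filterlim_sup) simp_all
  moreover have "continuous_on UNIV g"
    unfolding g_def[abs_def] relu_def using \<open>continuous_on UNIV f\<close> by (intro continuous_intros)
  ultimately show ?thesis
    using that unfolding g_def by blast
qed

lemma ReLU_X_approx_sublinear:
  fixes g :: "real \<Rightarrow> real"
  assumes "continuous_on UNIV g" "((\<lambda>x. g x / (1 + \<bar>x\<bar>)) \<longlongrightarrow> 0) at_infinity" "\<eta> > 0"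
  obtains p where "p \<in> ReLU_X" "\<And>x. \<bar>g x - p x\<bar> \<le> 2 * \<eta> * (1 + \<bar>x\<bar>)"
proof -
  have "\<forall>\<^sub>F x in at_infinity. \<bar>g x / (1 + \<bar>x\<bar>)\<bar> < \<eta>"
    using tendstoD[OF assms(2) \<open>\<eta> > 0\<close>] by (simp add: dist_real_def)
  then obtain R where R: "\<And>x. R \<le> \<bar>x\<bar> \<Longrightarrow> \<bar>g x / (1 + \<bar>x\<bar>)\<bar> < \<eta>"
    unfolding eventually_at_infinity by auto
  define R' where "R' = max R 1"
  have tail: "\<bar>g x\<bar> \<le> \<eta> * (1 + \<bar>x\<bar>)" if "R' \<le> \<bar>x\<bar>" for x
  proof -
    have "\<bar>g x\<bar> / (1 + \<bar>x\<bar>) < \<eta>"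
      using R[of x] that by (simp add: R'_def abs_divide)
    then show ?thesis
      by (simp add: divide_less_eq add_pos_nonneg less_imp_le)
  qed
  have "continuous_on {-R'..R'} g" "-R' < R'"
    using continuous_on_subset[OF assms(1)] by (auto simp: R'_def)
  then obtain p where "p \<in> ReLU_X" "clamped_approx p g (-R') R' \<eta>"
    using assms(3) by (rule ReLU_X_approx_on_interval)
  with clamped_approx_error[of R' \<eta> g p] tail assms(3) show ?thesis
    using that by (simp add: R'_def)
qed

lemma ReLU_X_dense_in_Y_space:
  assumes "f \<in> Y_space" "\<epsilon> > 0"
  shows "\<exists>h\<in>ReLU_X. Y_norm (\<lambda>x. f x - h x) < \<epsilon>"
proof -
  obtain L1 L2 where "continuous_on UNIV (\<lambda>x. f x - L1 * relu x - L2 * relu (- x))"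
    "((\<lambda>x. (f x - L1 * relu x - L2 * relu (- x)) / (1 + \<bar>x\<bar>)) \<longlongrightarrow> 0) at_infinity"
    using assms(1) by (rule Y_space_remove_asymptotes)
  moreover have "\<epsilon> / 4 > 0"
    using assms(2) by simp
  ultimately obtain p where "p \<in> ReLU_X"
    and p: "\<And>x. \<bar>(f x - L1 * relu x - L2 * relu (- x)) - p x\<bar> \<le> 2 * (\<epsilon> / 4) * (1 + \<bar>x\<bar>)"
    by (rule ReLU_X_approx_sublinear) blast
  define h where "h x = p x + L1 * relu x + L2 * relu (- x)" for x
  have "h \<in> ReLU_X"
    using \<open>p \<in> ReLU_X\<close> ReLU_X_relu[of 1 0] ReLU_X_relu[of "- 1" 0]
    unfolding h_def[abs_def] by (intro ReLU_X_add ReLU_X_cmult) simp_all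
  moreover have "Y_norm (\<lambda>x. f x - h x) \<le> \<epsilon> / 2"
    using p by (intro Y_norm_le) (simp add: h_def algebra_simps)
  ultimately show ?thesis
    using assms(2) by force
qed

theorem theorem1p1:
  shows "ReLU_X \<subseteq> Y_space \<and>
    (\<forall>f\<in>Y_space. \<forall>\<epsilon>>0. \<exists>h\<in>ReLU_X. Y_norm (\<lambda>x. f x - h x) < \<epsilon>)"
  using ReLU_X_subset_Y_space ReLU_X_dense_in_Y_space by blast

end
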